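(* Let $G$ be a claw-free graph and $C$ an even hole of length $2k$ with $k>2$, labelled $C=\mathbf{b}_0-\mathbf{a}_0-\mathbf{b}_1-\mathbf{a}_1-\dots-\mathbf{b}_{k-1}-\mathbf{a}_{k-1}-\mathbf{b}_0$. Let $\mathbf{s}\notin C$ with $\Gamma_C(\mathbf{s})=\{\mathbf{b}_0,\mathbf{a}_0,\mathbf{b}_1\}$. If a vertex $\mathbf{t}\notin C\cup\{\mathbf{s}\}$ is adjacent to at least one of $\mathbf{s},\mathbf{a}_0$ and to both $\mathbf{b}_0$ and $\mathbf{b}_1$, then $\mathbf{t}$ is adjacent to both $\mathbf{s}$ and $\mathbf{a}_0$.
   Context: A hole is an induced cycle of length at least 4; an even hole has even length. Claw-free: no induced $K_{1,3}$. $\Gamma_C(\mathbf{s})$ is the set of neighbours of $\mathbf{s}$ in $C$. *)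

theory Defs
  imports Main
begin

definition graph :: "'a set \<Rightarrow> ('a \<Rightarrow> 'a \<Rightarrow> bool) \<Rightarrow> bool" where
  "graph V E \<longleftrightarrow> (\<forall>x y. E x y \<longrightarrow> x \<in> V \<and> y \<in> V) \<and>
                   (\<forall>x y. E x y \<longrightarrow> E y x) \<and> (\<forall>x. \<not> E x x)"

definition claw_free :: "'a set \<Rightarrow> ('a \<Rightarrow> 'a \<Rightarrow> bool) \<Rightarrow> bool" where
  "claw_free V E \<longleftrightarrow> \<not> (\<exists>x\<in>V. \<exists>y1\<in>V. \<exists>y2\<in>V. \<exists>y3\<in>V.
      E x y1 \<and> E x y2 \<and> E x y3 \<and>
      y1 \<noteq> y2 \<and> y1 \<noteq> y3 \<and> y2 \<noteq> y3 \<and>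
      \<not> E y1 y2 \<and> \<not> E y1 y3 \<and> \<not> E y2 y3)"

definition induced_cycle :: "'a set \<Rightarrow> ('a \<Rightarrow> 'a \<Rightarrow> bool) \<Rightarrow> nat \<Rightarrow> (nat \<Rightarrow> 'a) \<Rightarrow> bool" where
  "induced_cycle V E n c \<longleftrightarrow> n \<ge> 3 \<and> inj_on c {0..<n} \<and> c ` {0..<n} \<subseteq> V \<and>
     (\<forall>i<n. \<forall>j<n. E (c i) (c j) \<longleftrightarrow> (j = (i + 1) mod n \<or> i = (j + 1) mod n))"

definition nbrs_in :: "('a \<Rightarrow> 'a \<Rightarrow> bool) \<Rightarrow> 'a set \<Rightarrow> 'a \<Rightarrow> 'a set" where
  "nbrs_in E C s = {v \<in> C. E s v}"

end

theory Submission
  imports Defs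
begin

(* Let x, y be s and a_0 in some order and suppose t sees x but not y.  Since y sees b_0 and b_1
   but neither a_{k-1} nor a_1, the claws centred at b_0 and at b_1 force t to see a_{k-1} and
   a_1.  For k > 2 these two are non-adjacent, and neither sees x, so t is the centre of a claw
   with leaves x, a_1, a_{k-1}. *)

lemma claw_free_forces_edge:
  assumes "graph V E" "claw_free V E"
    and "E x y1" "E x y2" "E x y3"
    and "\<not> E y1 y2" "\<not> E y1 y3" "y1 \<noteq> y2" "y1 \<noteq> y3" "y2 \<noteq> y3"
  shows "E y2 y3"
proof (rule ccontr)
  assume "\<not> E y2 y3"
  have "x \<in> V" "y1 \<in> V" "y2 \<in> V" "y3 \<in> V"
    using assms(1,3-5) unfolding graph_def by blast+
  with assms \<open>\<not> E y2 y3\<close> show False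
    unfolding claw_free_def by blast
qed

lemma graph_sym: "graph V E \<Longrightarrow> E u v \<Longrightarrow> E v u"
  unfolding graph_def by blast

lemma claw_free_common_neighbour_adjacent:
  assumes G: "graph V E" "claw_free V E"
    and "E b0 q" "E b1 p" "\<not> E p q" "p \<noteq> q"
    and "E y b0" "E y b1" "\<not> E y p" "\<not> E y q" "y \<noteq> p" "y \<noteq> q"
    and "\<not> E x p" "\<not> E x q" "x \<noteq> p" "x \<noteq> q"
    and "E t b0" "E t b1" "E t x" "t \<noteq> y" "t \<noteq> p" "t \<noteq> q"
  shows "E t y"
proof (rule ccontr)
  assume "\<not> E t y"
  then have "\<not> E y t"
    using graph_sym[OF G(1)] by blast
  have "E p t"
    by (rule claw_free_forces_edge[OF G, of b1 y p t])
      (use assms \<open>\<not> E y t\<close> graph_sym[OF G(1)] in auto)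
  moreover have "E q t"
    by (rule claw_free_forces_edge[OF G, of b0 y q t])
      (use assms \<open>\<not> E y t\<close> graph_sym[OF G(1)] in auto)
  ultimately have "E p q"
    by (intro claw_free_forces_edge[OF G, of t x p q])
      (use assms graph_sym[OF G(1)] in auto)
  with \<open>\<not> E p q\<close> show False ..
qed

lemma induced_cycle_edge_iff:
  assumes "induced_cycle V E n c" "i < n" "j < n"
  shows "E (c i) (c j) \<longleftrightarrow> j = (i + 1) mod n \<or> i = (j + 1) mod n"
  using assms unfolding induced_cycle_def by blast

lemma induced_cycle_eq_iff:
  assumes "induced_cycle V E n c" "i < n" "j < n"
  shows "c i = c j \<longleftrightarrow> i = j"
  using assms unfolding induced_cycle_def by (auto dest: inj_onD)

theorem corollary4:
  fixes V :: "'a set" and E :: "'a \<Rightarrow> 'a \<Rightarrow> bool"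
    and k :: nat and c :: "nat \<Rightarrow> 'a" and s t :: 'a
  assumes "graph V E"
    and "claw_free V E"
    and "k > 2"
    and "induced_cycle V E (2 * k) c"
    and "s \<in> V" and "s \<notin> c ` {0..<2 * k}"
    and "nbrs_in E (c ` {0..<2 * k}) s = {c 0, c 1, c 2}"
    and "t \<in> V" and "t \<notin> c ` {0..<2 * k}" and "t \<noteq> s"
    and "E t s \<or> E t (c 1)"
    and "E t (c 0)" and "E t (c 2)"
  shows "E t s \<and> E t (c 1)"
proof -
  define m where "m = 2 * k - 1"
  have idx: "0 < 2 * k" "1 < 2 * k" "2 < 2 * k" "3 < 2 * k" "m < 2 * k" "(m + 1) mod (2 * k) = 0"
    using \<open>k > 2\<close> unfolding m_def by auto
  note edge = induced_cycle_edge_iff[OF assms(4)] and eq = induced_cycle_eq_iff[OF assms(4)]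
  have hole: "E (c 0) (c m)" "E (c 2) (c 3)" "\<not> E (c 3) (c m)" "c 3 \<noteq> c m"
    "E (c 1) (c 0)" "E (c 1) (c 2)" "\<not> E (c 1) (c 3)" "\<not> E (c 1) (c m)" "c 1 \<noteq> c 3" "c 1 \<noteq> c m"
    using idx \<open>k > 2\<close> edge eq unfolding m_def by auto
  have s_nbrs: "E s v \<longleftrightarrow> v \<in> {c 0, c 1, c 2}" if "v \<in> c ` {0..<2 * k}" for v
    using assms(7) that unfolding nbrs_in_def by blast
  have s_hole: "E s (c 0)" "E s (c 2)" "\<not> E s (c 3)" "\<not> E s (c m)" "s \<noteq> c 3" "s \<noteq> c m"
    using s_nbrs[of "c 0"] s_nbrs[of "c 2"] s_nbrs[of "c 3"] s_nbrs[of "c m"]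
      idx \<open>k > 2\<close> eq assms(6) unfolding m_def by auto
  have t_hole: "t \<noteq> c 1" "t \<noteq> c 3" "t \<noteq> c m"
    using idx assms(9) by auto
  note common = claw_free_common_neighbour_adjacent[OF assms(1,2) hole(1-4)]
  have "E t s \<Longrightarrow> E t (c 1)"
    using common[of "c 1" s t] hole(5-10) s_hole(3-6) assms(12,13) t_hole by blast
  moreover have "E t (c 1) \<Longrightarrow> E t s"
    using common[of s "c 1" t] s_hole hole(7-10) assms(10,12,13) t_hole by blast
  ultimately show ?thesis
    using assms(11) by blast
qed

end
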